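(* Let $(\gamma_i)_{i=0}^n$ be a linear sequence of geodesics in $\mathbb{H}^2$, and let $(x_i)_{i=0}^n$ be a homologous sequence of points on the $\gamma_i$. Then for every $y \in \gamma_n$, $$d(x_n, y) \le d(x_0, y).$$
   Context: A linear sequence of geodesics in $\mathbb{H}^2$ is a sequence $(\gamma_i)_{i=0}^n$ of pairwise disjoint geodesics, consecutive ones having a common orthogonal, such that each $\gamma_i$ separates those before it from those after it. Each $\gamma_i$ is oriented so that the geodesics following it in the sequence lie to its left ($\mathbb{H}^2$ being oriented). Let $\eta_i$ be the common orthogonal of $\gamma_i$ and $\gamma_{i+1}$. A homologous sequence of points is a sequence $x_i\in\gamma_i$ such that for each $i$, the signed distance (along $\gamma_{i+1}$, with its orientation) from the foot of $\eta_i$ on $\gamma_{i+1}$ to $x_{i+1}$ equals the signed distance (along $\gamma_i$, with its orientation) from the foot of $\eta_i$ on $\gamma_i$ to $x_i$; equivalently $x_{i+1}$ is the image of $x_i$ under the orientation-preserving isometry taking the oriented geodesic $\gamma_i$ to $\gamma_{i+1}$ and the foot of $\eta_i$ on $\gamma_i$ to its foot on $\gamma_{i+1}$. *)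

theory Defs
  imports "HOL-Analysis.Analysis"
begin

text \<open>Hyperboloid model of the hyperbolic plane inside real^3 with the
Minkowski form x1 y1 + x2 y2 - x3 y3.\<close>

definition mink :: "real^3 \<Rightarrow> real^3 \<Rightarrow> real" where
  "mink x y = x$1 * y$1 + x$2 * y$2 - x$3 * y$3"

definition hyp_pt :: "real^3 \<Rightarrow> bool" where
  "hyp_pt x \<longleftrightarrow> mink x x = -1 \<and> x$3 > 0"

definition hdist :: "real^3 \<Rightarrow> real^3 \<Rightarrow> real" where
  "hdist x y = arcosh (- mink x y)"

text \<open>The oriented geodesic is its image, oriented in the direction of increasing parameter;
the signed distance from c s to c t along it is t - s.\<close>
definition geod_line :: "(real \<Rightarrow> real^3) \<Rightarrow> bool" where
  "geod_line c \<longleftrightarrow> (\<forall>t. hyp_pt (c t)) \<and> (\<forall>s t. hdist (c s) (c t) = \<bar>s - t\<bar>)"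

text \<open>Ambient determinant det(p,q,x) (scalar triple product).  The hyperbolic plane is
oriented by declaring a tangent basis (u,v) at p positive iff det(p,u,v) > 0.\<close>
definition det3 :: "real^3 \<Rightarrow> real^3 \<Rightarrow> real^3 \<Rightarrow> real" where
  "det3 p q x = p$1 * (q$2 * x$3 - q$3 * x$2) - p$2 * (q$1 * x$3 - q$3 * x$1)
               + p$3 * (q$1 * x$2 - q$2 * x$1)"

definition left_of :: "(real \<Rightarrow> real^3) \<Rightarrow> real^3 \<Rightarrow> bool" where
  "left_of c x \<longleftrightarrow> hyp_pt x \<and> det3 (c 0) (c 1) x > 0"

definition right_of :: "(real \<Rightarrow> real^3) \<Rightarrow> real^3 \<Rightarrow> bool" where
  "right_of c x \<longleftrightarrow> hyp_pt x \<and> det3 (c 0) (c 1) x < 0"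

definition meets_orth :: "(real \<Rightarrow> real^3) \<Rightarrow> real \<Rightarrow> (real \<Rightarrow> real^3) \<Rightarrow> bool" where
  "meets_orth c s e \<longleftrightarrow> (\<exists>t. e t = c s \<and>
      mink (vector_derivative c (at s)) (vector_derivative e (at t)) = 0)"

definition separates :: "(real^3) set \<Rightarrow> (real^3) set \<Rightarrow> (real^3) set \<Rightarrow> bool" where
  "separates A B C \<longleftrightarrow> (\<forall>P. path P \<and> path_image P \<subseteq> Collect hyp_pt \<and>
      pathstart P \<in> B \<and> pathfinish P \<in> C \<longrightarrow> path_image P \<inter> A \<noteq> {})"

end

theory Submission
  imports Defs
begin

text \<open>A homologous step from gamma_i to gamma_(i+1) is the hyperbolic translation along
  the common perpendicular eta_i: it moves the foot P to the foot Q and carries the unit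
  tangent U of gamma_i at P to the unit tangent of gamma_(i+1) at Q. In the hyperboloid
  model x_i = cosh s P + sinh s U and x_(i+1) = cosh s Q + sinh s U, hence
  <x_(i+1), y> - <x_i, y> = cosh s (<Q, y> - <P, y>), and Q is no farther than P from any
  y in the closed half-plane to the left of gamma_(i+1). As cosh d(x, y) = - <x, y>, the
  distance from x_i to a point y of gamma_n is non-increasing in i.\<close>

lemma mink_commute: "mink x y = mink y x"
  by (simp add: mink_def algebra_simps)

lemma mink_add_left: "mink (x + y) z = mink x z + mink y z"
  and mink_add_right: "mink z (x + y) = mink z x + mink z y"
  and mink_diff_left: "mink (x - y) z = mink x z - mink y z"
  and mink_diff_right: "mink z (x - y) = mink z x - mink z y"
  and mink_scaleR_left: "mink (r *\<^sub>R x) z = r * mink x z"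
  and mink_scaleR_right: "mink z (r *\<^sub>R x) = r * mink z x"
  by (simp_all add: mink_def algebra_simps)

lemmas mink_bilinear =
  mink_add_left mink_add_right mink_diff_left mink_diff_right mink_scaleR_left mink_scaleR_right

text \<open>The Gram identity for the Minkowski form: the Minkowski Gram matrix of
  two triples is G = A J B^T with J = diag(1,1,-1), so det G = - det A * det B.\<close>

lemma det3_mult_det3:
  "det3 a b c * det3 d e f =
   - (mink a d * (mink b e * mink c f - mink b f * mink c e)
    - mink a e * (mink b d * mink c f - mink b f * mink c d)
    + mink a f * (mink b d * mink c e - mink b e * mink c d))"
  unfolding det3_def mink_def by (simp add: algebra_simps)

lemma hyp_pt_mink_le:
  assumes "hyp_pt x" "hyp_pt y"
  shows "mink x y \<le> -1"
proof -
  define p where "p = x$1 * y$1 + x$2 * y$2"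
  define A where "A = (x$1)\<^sup>2 + (x$2)\<^sup>2"
  define B where "B = (y$1)\<^sup>2 + (y$2)\<^sup>2"
  have x3: "(x$3)\<^sup>2 = 1 + A" "x$3 > 0" and y3: "(y$3)\<^sup>2 = 1 + B" "y$3 > 0"
    using assms unfolding hyp_pt_def mink_def A_def B_def by (auto simp: power2_eq_square)
  have "A + B - 2 * p = (x$1 - y$1)\<^sup>2 + (x$2 - y$2)\<^sup>2"
    and "A * B - p\<^sup>2 = (x$1 * y$2 - x$2 * y$1)\<^sup>2"
    unfolding A_def B_def p_def by (simp_all add: power2_eq_square algebra_simps)
  then have "A + B \<ge> 2 * p" "A * B \<ge> p\<^sup>2"
    by (smt (verit) zero_le_power2)+
  moreover have "(x$3 * y$3)\<^sup>2 = 1 + (A + B) + A * B"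
    using x3 y3 by (simp add: power_mult_distrib algebra_simps)
  ultimately have "(1 + p)\<^sup>2 \<le> (x$3 * y$3)\<^sup>2"
    by (simp add: power2_eq_square algebra_simps)
  moreover have "x$3 * y$3 > 0"
    using x3 y3 by simp
  ultimately have "x$3 * y$3 \<ge> 1 + p"
    by (smt (verit) power2_le_imp_le)
  then show ?thesis
    unfolding mink_def p_def by simp
qed

text \<open>The Minkowski orthogonal complement of a timelike vector is spacelike, so it
  contains no nonzero null vector.\<close>

lemma mink_null_orthogonal_eq_0:
  assumes "mink v v = 0" "mink v p = 0" "hyp_pt p"
  shows "v = 0"
proof -
  have p3: "(p$3)\<^sup>2 = 1 + (p$1)\<^sup>2 + (p$2)\<^sup>2"
    using assms(3) unfolding hyp_pt_def mink_def by (auto simp: power2_eq_square)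
  have v3: "(v$3)\<^sup>2 = (v$1)\<^sup>2 + (v$2)\<^sup>2"
    using assms(1) unfolding mink_def by (simp add: power2_eq_square)
  have "(v$1 * p$1 + v$2 * p$2)\<^sup>2 = (v$3)\<^sup>2 * (p$3)\<^sup>2"
    using assms(2) unfolding mink_def by (simp add: power_mult_distrib)
  also have "\<dots> = ((v$1)\<^sup>2 + (v$2)\<^sup>2) + ((v$1)\<^sup>2 + (v$2)\<^sup>2) * ((p$1)\<^sup>2 + (p$2)\<^sup>2)"
    unfolding v3 p3 by (simp add: algebra_simps)
  also have "((v$1)\<^sup>2 + (v$2)\<^sup>2) * ((p$1)\<^sup>2 + (p$2)\<^sup>2)
      = (v$1 * p$1 + v$2 * p$2)\<^sup>2 + (v$1 * p$2 - v$2 * p$1)\<^sup>2"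
    by (simp add: power2_eq_square algebra_simps)
  finally have "(v$1)\<^sup>2 + (v$2)\<^sup>2 + (v$1 * p$2 - v$2 * p$1)\<^sup>2 = 0"
    by linarith
  then have "(v$1)\<^sup>2 = 0" "(v$2)\<^sup>2 = 0"
    by (smt (verit) zero_le_power2)+
  with v3 show ?thesis
    by (simp add: vec_eq_iff forall_3)
qed

lemma hdist_le_hdist_iff:
  assumes "hyp_pt x" "hyp_pt x'" "hyp_pt y"
  shows "hdist x y \<le> hdist x' y \<longleftrightarrow> mink x' y \<le> mink x y"
proof -
  have "1 \<le> - mink x y" "1 \<le> - mink x' y"
    using hyp_pt_mink_le[of x y] hyp_pt_mink_le[of x' y] assms by linarith+
  then show ?thesis
    unfolding hdist_def by (metis arcosh_less_iff_real neg_less_iff_less not_less)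
qed

lemma geod_line_mink:
  assumes "geod_line c"
  shows "mink (c s) (c t) = - cosh (s - t)"
proof -
  have "hyp_pt (c s)" "hyp_pt (c t)" "arcosh (- mink (c s) (c t)) = \<bar>s - t\<bar>"
    using assms unfolding geod_line_def hdist_def by auto
  then have "- mink (c s) (c t) = cosh \<bar>s - t\<bar>"
    using hyp_pt_mink_le by (metis cosh_arcosh_real le_minus_iff minus_minus)
  moreover have "cosh \<bar>u\<bar> = cosh u" for u :: real
    by (simp add: abs_if)
  ultimately show ?thesis
    by simp
qed

lemma eq_cosh_sinh_of_mink:
  assumes P: "hyp_pt P" and U: "mink U U = 1" "mink P U = 0"
    and z: "mink z z = -1" "mink z P = - cosh r" "mink z U = sinh r"
  shows "z = cosh r *\<^sub>R P + sinh r *\<^sub>R U"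
proof -
  define v where "v = z - (cosh r *\<^sub>R P + sinh r *\<^sub>R U)"
  have PP: "mink P P = -1"
    using P by (simp add: hyp_pt_def)
  have sym: "mink P z = - cosh r" "mink U z = sinh r" "mink U P = 0"
    using z U by (simp_all add: mink_commute)
  have "mink v P = 0"
    unfolding v_def using PP U z sym by (simp add: mink_bilinear)
  moreover have "mink v v = 0"
  proof -
    have "mink v v = -1 + (cosh r)\<^sup>2 - (sinh r)\<^sup>2"
      unfolding v_def using PP U z sym
      by (simp add: mink_bilinear power2_eq_square algebra_simps)
    then show ?thesis
      by (simp add: cosh_square_eq)
  qed
  ultimately show ?thesis
    using mink_null_orthogonal_eq_0 P unfolding v_def by fastforce
qed

lemma geod_line_cosh_sinh:
  assumes c: "geod_line c"
  obtains U where "mink U U = 1" "mink (c a) U = 0"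
    "\<And>t. c t = cosh (t - a) *\<^sub>R c a + sinh (t - a) *\<^sub>R U"
proof -
  define U where "U = (1 / sinh 1) *\<^sub>R (c (a + 1) - cosh 1 *\<^sub>R c a)"
  have tU: "mink (c t) U = sinh (t - a)" for t
  proof -
    have "mink (c t) U = (cosh 1 * cosh (t - a) - cosh (t - (a + 1))) / sinh 1"
      unfolding U_def using geod_line_mink[OF c] by (simp add: mink_bilinear field_simps)
    also have "cosh (t - (a + 1)) = cosh (t - a) * cosh 1 - sinh (t - a) * sinh 1"
      using cosh_diff[of "t - a" 1] by (simp add: algebra_simps)
    also have "(cosh 1 * cosh (t - a) - (cosh (t - a) * cosh 1 - sinh (t - a) * sinh 1)) / sinh 1
        = sinh (t - a)"
      by simp
    finally show ?thesis .
  qed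
  have PU: "mink (c a) U = 0"
    using tU[of a] by simp
  have "mink U U = (1 / sinh 1) * (mink (c (a + 1)) U - cosh 1 * mink (c a) U)"
    by (subst (1) U_def) (simp add: mink_bilinear)
  then have UU: "mink U U = 1"
    using tU[of "a + 1"] PU by simp
  have "c t = cosh (t - a) *\<^sub>R c a + sinh (t - a) *\<^sub>R U" for t
    using c UU PU tU geod_line_mink[OF c, of t t] geod_line_mink[OF c, of t a]
    by (intro eq_cosh_sinh_of_mink) (auto simp: geod_line_def)
  with UU PU show thesis
    by (rule that)
qed

lemma vector_derivative_cosh_sinh:
  assumes "\<And>t. f t = cosh (t - a) *\<^sub>R P + sinh (t - a) *\<^sub>R U"
  shows "vector_derivative f (at s) = sinh (s - a) *\<^sub>R P + cosh (s - a) *\<^sub>R U"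
proof -
  have "f = (\<lambda>t. cosh (t - a) *\<^sub>R P + sinh (t - a) *\<^sub>R U)"
    using assms by auto
  moreover have "((\<lambda>t. cosh (t - a) *\<^sub>R P + sinh (t - a) *\<^sub>R U) has_vector_derivative
      (sinh (s - a) *\<^sub>R P + cosh (s - a) *\<^sub>R U)) (at s)"
    by (auto intro!: derivative_eq_intros)
  ultimately show ?thesis
    using vector_derivative_at by blast
qed

lemma det3_cosh_sinh:
  assumes "\<And>t. c t = cosh (t - a) *\<^sub>R P + sinh (t - a) *\<^sub>R U"
  shows "det3 (c 0) (c 1) z = sinh 1 * det3 P U z"
proof -
  have "det3 (c 0) (c 1) z = (cosh (0 - a) * sinh (1 - a) - sinh (0 - a) * cosh (1 - a)) * det3 P U z"
    unfolding assms det3_def by (simp add: algebra_simps)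
  also have "cosh (0 - a) * sinh (1 - a) - sinh (0 - a) * cosh (1 - a) = sinh 1"
    using sinh_diff[of "1 - a" "0 - a"] by (simp add: algebra_simps)
  finally show ?thesis .
qed

lemma det3_geod_line_eq_0:
  assumes "geod_line c"
  shows "det3 (c 0) (c 1) (c t) = 0"
proof -
  obtain U where c: "\<And>t. c t = cosh (t - 0) *\<^sub>R c 0 + sinh (t - 0) *\<^sub>R U"
    using geod_line_cosh_sinh[OF assms, of 0] by blast
  have "det3 (c 0) U (c t) = 0"
    unfolding c[of t] det3_def by (simp add: algebra_simps)
  then show ?thesis
    using det3_cosh_sinh[OF c] by simp
qed

definition hyp_frame :: "real^3 \<Rightarrow> real^3 \<Rightarrow> real^3 \<Rightarrow> bool" where
  "hyp_frame P U W \<longleftrightarrow> hyp_pt P \<and> mink U U = 1 \<and> mink W W = 1 \<and>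
     mink P U = 0 \<and> mink P W = 0 \<and> mink U W = 0"

lemma hyp_frame_mink:
  assumes "hyp_frame P U W"
  shows "mink P P = -1" "mink U U = 1" "mink W W = 1" "mink P U = 0" "mink U P = 0"
    "mink P W = 0" "mink W P = 0" "mink U W = 0" "mink W U = 0"
  using assms by (auto simp: hyp_frame_def hyp_pt_def mink_commute)

lemma hyp_frame_det3_square:
  assumes "hyp_frame P U W"
  shows "det3 P U W * det3 P U W = 1"
  using det3_mult_det3[of P U W P U W] hyp_frame_mink[OF assms] by simp

text \<open>In the following two lemmas, P is the foot of a common perpendicular on a
  geodesic with unit tangent U there, W is the unit tangent of the perpendicular at P,
  and Q is the other foot, at distance L along the perpendicular.\<close>

lemma common_perpendicular_tangent_eq:
  assumes F: "hyp_frame P U W"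
    and Q: "Q = cosh L *\<^sub>R P + sinh L *\<^sub>R W"
    and V: "mink V V = 1" "mink Q V = 0" "mink V (sinh L *\<^sub>R P + cosh L *\<^sub>R W) = 0"
    and left: "det3 P U Q > 0" and right: "det3 Q V P < 0"
  shows "V = U"
proof -
  note frame = hyp_frame_mink[OF F]
  define k where "k = mink V U"
  have eqs: "cosh L * mink V P + sinh L * mink V W = 0"
    "sinh L * mink V P + cosh L * mink V W = 0"
    using V(2,3) unfolding Q by (simp_all add: mink_bilinear mink_commute[of _ V])
  have "mink V P = ((cosh L)\<^sup>2 - (sinh L)\<^sup>2) * mink V P"
    by (simp add: cosh_square_eq)
  also have "\<dots> = cosh L * (cosh L * mink V P + sinh L * mink V W)
      - sinh L * (sinh L * mink V P + cosh L * mink V W)"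
    by (simp add: power2_eq_square algebra_simps)
  finally have VP: "mink V P = 0"
    using eqs by simp
  then have VW: "mink V W = 0"
    using eqs by (simp add: cosh_real_pos[THEN less_imp_neq, symmetric])
  \<comment> \<open>Being orthogonal to P and W, V is \<open>\<plusminus>U\<close>; the orientation hypotheses fix the sign.\<close>
  have sym: "mink P V = 0" "mink W V = 0" "mink U V = k"
    using VP VW unfolding k_def by (simp_all add: mink_commute)
  have "det3 P W V * det3 P U W = - k" "det3 P W V * det3 P W V = 1"
    using det3_mult_det3[of P W V P U W] det3_mult_det3[of P W V P W V] frame V VP VW sym
    by (simp_all add: k_def)
  then have "k * k = (det3 P W V * det3 P W V) * (det3 P U W * det3 P U W)"
    by (metis minus_mult_minus mult.assoc mult.left_commute)
  then have "k * k = 1"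
    using \<open>det3 P W V * det3 P W V = 1\<close> hyp_frame_det3_square[OF F] by simp
  then have "mink (V - k *\<^sub>R U) (V - k *\<^sub>R U) = 0" "mink (V - k *\<^sub>R U) P = 0"
    using frame V VP sym unfolding k_def by (simp_all add: mink_bilinear)
  then have V_eq: "V = k *\<^sub>R U"
    using mink_null_orthogonal_eq_0 F unfolding hyp_frame_def by fastforce
  have "det3 Q V P = - k * det3 P U Q"
    unfolding V_eq det3_def by (simp add: algebra_simps)
  then have "k > 0"
    using left right by (simp add: zero_less_mult_iff)
  with \<open>k * k = 1\<close> have "k = 1"
    by (auto simp: square_eq_1_iff)
  then show ?thesis
    using V_eq by simp
qed

lemma common_perpendicular_foot_mink_le:
  assumes F: "hyp_frame P U W"
    and Q: "Q = cosh L *\<^sub>R P + sinh L *\<^sub>R W"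
    and left: "det3 P U Q > 0"
    and y: "hyp_pt y" "det3 Q U y \<ge> 0"
  shows "mink P y \<le> mink Q y"
proof -
  note frame = hyp_frame_mink[OF F]
  define \<sigma> \<alpha> \<gamma> C S where "\<sigma> = det3 P U W" and "\<alpha> = - mink P y" and "\<gamma> = mink W y"
    and "C = cosh L" and "S = sinh L"
  have QF: "mink Q P = - C" "mink Q U = 0" "mink Q W = S"
    unfolding Q C_def S_def by (simp_all add: mink_bilinear frame)
  have gram_Q: "det3 P U Q * \<sigma> = S"
    using det3_mult_det3[of P U Q P U W] frame QF unfolding \<sigma>_def by simp
  have gram_y: "det3 Q U y * \<sigma> = C * \<gamma> - S * \<alpha>"
    using det3_mult_det3[of Q U y P U W] frame QF unfolding \<sigma>_def \<alpha>_def \<gamma>_def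
    by (simp add: mink_commute[of y] algebra_simps)
  have "S * \<sigma> = det3 P U Q * (\<sigma> * \<sigma>)"
    unfolding gram_Q[symmetric] by (simp add: mult_ac)
  then have S\<sigma>: "S * \<sigma> = det3 P U Q"
    using hyp_frame_det3_square[OF F] unfolding \<sigma>_def by simp
  have "S * (C * \<gamma> - S * \<alpha>) = (S * \<sigma>) * det3 Q U y"
    unfolding gram_y[symmetric] by (simp add: mult_ac)
  then have sign: "S * (C * \<gamma> - S * \<alpha>) \<ge> 0"
    using left y(2) unfolding S\<sigma> by simp
  have "\<alpha> \<ge> 1" "C \<ge> 1"
    using hyp_pt_mink_le[of P y] F y unfolding hyp_frame_def \<alpha>_def C_def
    by (auto simp: cosh_real_ge_1)
  have "S\<^sup>2 * \<alpha> = (C\<^sup>2 - 1) * \<alpha>"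
    unfolding C_def S_def by (simp add: cosh_square_eq)
  then have "S\<^sup>2 * \<alpha> = C * (\<alpha> * (C - 1)) + \<alpha> * (C - 1)"
    by (simp add: power2_eq_square algebra_simps)
  moreover have "\<alpha> * (C - 1) \<ge> 0"
    using \<open>\<alpha> \<ge> 1\<close> \<open>C \<ge> 1\<close> by simp
  ultimately have "C * (S * \<gamma>) \<ge> C * (\<alpha> * (C - 1))"
    using sign by (simp add: power2_eq_square algebra_simps)
  then have "S * \<gamma> \<ge> \<alpha> * (C - 1)"
    using \<open>C \<ge> 1\<close> by simp
  moreover have "mink Q y = - C * \<alpha> + S * \<gamma>"
    unfolding Q \<alpha>_def \<gamma>_def C_def S_def by (simp add: mink_bilinear)
  ultimately show ?thesis
    unfolding \<alpha>_def by (simp add: algebra_simps)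
qed

lemma common_perpendicular_frame:
  assumes c0: "geod_line c0" and c1: "geod_line c1" and e: "geod_line e"
    and perp0: "meets_orth c0 a0 e" and perp1: "meets_orth c1 b0 e"
  obtains U W V L where "hyp_frame (c0 a0) U W"
    "\<And>t. c0 t = cosh (t - a0) *\<^sub>R c0 a0 + sinh (t - a0) *\<^sub>R U"
    "\<And>t. c1 t = cosh (t - b0) *\<^sub>R c1 b0 + sinh (t - b0) *\<^sub>R V"
    "c1 b0 = cosh L *\<^sub>R c0 a0 + sinh L *\<^sub>R W"
    "mink V V = 1" "mink (c1 b0) V = 0" "mink V (sinh L *\<^sub>R c0 a0 + cosh L *\<^sub>R W) = 0"
proof -
  obtain U where U: "mink U U = 1" "mink (c0 a0) U = 0"
    and r0: "\<And>t. c0 t = cosh (t - a0) *\<^sub>R c0 a0 + sinh (t - a0) *\<^sub>R U"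
    using geod_line_cosh_sinh[OF c0] by blast
  obtain V where V: "mink V V = 1" "mink (c1 b0) V = 0"
    and r1: "\<And>t. c1 t = cosh (t - b0) *\<^sub>R c1 b0 + sinh (t - b0) *\<^sub>R V"
    using geod_line_cosh_sinh[OF c1] by blast
  obtain t0 where t0: "e t0 = c0 a0" "mink U (vector_derivative e (at t0)) = 0"
    using perp0 vector_derivative_cosh_sinh[OF r0, of a0] unfolding meets_orth_def by auto
  obtain t1 where t1: "e t1 = c1 b0" "mink V (vector_derivative e (at t1)) = 0"
    using perp1 vector_derivative_cosh_sinh[OF r1, of b0] unfolding meets_orth_def by auto
  obtain W where W: "mink W W = 1" "mink (e t0) W = 0"
    and re: "\<And>t. e t = cosh (t - t0) *\<^sub>R e t0 + sinh (t - t0) *\<^sub>R W"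
    using geod_line_cosh_sinh[OF e] by blast
  have "hyp_frame (c0 a0) U W"
    using c0 U W t0 vector_derivative_cosh_sinh[OF re, of t0]
    unfolding hyp_frame_def geod_line_def by auto
  moreover have "c1 b0 = cosh (t1 - t0) *\<^sub>R c0 a0 + sinh (t1 - t0) *\<^sub>R W"
    using re[of t1] t0 t1 by simp
  moreover have "mink V (sinh (t1 - t0) *\<^sub>R c0 a0 + cosh (t1 - t0) *\<^sub>R W) = 0"
    using t1 vector_derivative_cosh_sinh[OF re, of t1] t0 by simp
  ultimately show ?thesis
    using that[OF _ r0 r1 _ V] by blast
qed

lemma homologous_points_mink_le:
  assumes c0: "geod_line c0" and c1: "geod_line c1" and e: "geod_line e"
    and perp0: "meets_orth c0 a0 e" and perp1: "meets_orth c1 b0 e"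
    and left: "\<forall>z \<in> range c1. left_of c0 z" and right: "\<forall>z \<in> range c0. right_of c1 z"
    and y: "y \<in> range c1 \<or> left_of c1 y"
  shows "mink (c0 (a0 + s)) y \<le> mink (c1 (b0 + s)) y"
proof -
  obtain U W V L where F: "hyp_frame (c0 a0) U W"
    and r0: "\<And>t. c0 t = cosh (t - a0) *\<^sub>R c0 a0 + sinh (t - a0) *\<^sub>R U"
    and r1: "\<And>t. c1 t = cosh (t - b0) *\<^sub>R c1 b0 + sinh (t - b0) *\<^sub>R V"
    and Q: "c1 b0 = cosh L *\<^sub>R c0 a0 + sinh L *\<^sub>R W"
    and V: "mink V V = 1" "mink (c1 b0) V = 0" "mink V (sinh L *\<^sub>R c0 a0 + cosh L *\<^sub>R W) = 0"
    using common_perpendicular_frame[OF c0 c1 e perp0 perp1] by blast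
  have "det3 (c0 0) (c0 1) (c1 b0) > 0" "det3 (c1 0) (c1 1) (c0 a0) < 0"
    using left right unfolding left_of_def right_of_def by blast+
  then have P_Q: "det3 (c0 a0) U (c1 b0) > 0" and Q_P: "det3 (c1 b0) V (c0 a0) < 0"
    unfolding det3_cosh_sinh[OF r0] det3_cosh_sinh[OF r1]
    by (simp_all add: zero_less_mult_iff mult_less_0_iff)
  have "V = U"
    by (rule common_perpendicular_tangent_eq[OF F Q V P_Q Q_P])
  have "hyp_pt y \<and> det3 (c1 0) (c1 1) y \<ge> 0"
    using y
  proof
    assume "y \<in> range c1"
    then obtain t where "y = c1 t"
      by blast
    then show ?thesis
      using c1 det3_geod_line_eq_0[OF c1, of t] unfolding geod_line_def by simp
  qed (simp add: left_of_def)
  then have "mink (c0 a0) y \<le> mink (c1 b0) y"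
    using common_perpendicular_foot_mink_le[OF F Q P_Q] \<open>V = U\<close>
    unfolding det3_cosh_sinh[OF r1] by (simp add: zero_le_mult_iff)
  moreover have "c0 (a0 + s) = cosh s *\<^sub>R c0 a0 + sinh s *\<^sub>R U"
    and "c1 (b0 + s) = cosh s *\<^sub>R c1 b0 + sinh s *\<^sub>R U"
    using r0[of "a0 + s"] r1[of "b0 + s"] \<open>V = U\<close> by simp_all
  ultimately show ?thesis
    by (simp add: mink_bilinear)
qed

theorem lemmaA11:
  fixes n :: nat
    and c :: "nat \<Rightarrow> real \<Rightarrow> real^3"
    and e :: "nat \<Rightarrow> real \<Rightarrow> real^3"
    and a b :: "nat \<Rightarrow> real"
    and x :: "nat \<Rightarrow> real^3"
  assumes geod: "\<And>i. i \<le> n \<Longrightarrow> geod_line (c i)"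
    and disj: "\<And>i j. i \<le> n \<Longrightarrow> j \<le> n \<Longrightarrow> i \<noteq> j \<Longrightarrow> range (c i) \<inter> range (c j) = {}"
    and sep: "\<And>k i j. k < i \<Longrightarrow> i < j \<Longrightarrow> j \<le> n \<Longrightarrow>
                 separates (range (c i)) (range (c k)) (range (c j))"
    and orient: "\<And>i j. i < j \<Longrightarrow> j \<le> n \<Longrightarrow>
                 (\<forall>z \<in> range (c j). left_of (c i) z) \<and> (\<forall>z \<in> range (c i). right_of (c j) z)"
    and perp: "\<And>i. i < n \<Longrightarrow> geod_line (e i) \<and> meets_orth (c i) (a i) (e i)
                                  \<and> meets_orth (c (Suc i)) (b i) (e i)"
    and on_geod: "\<And>i. i \<le> n \<Longrightarrow> x i \<in> range (c i)"
    and homol: "\<And>i. i < n \<Longrightarrow> \<exists>s. x i = c i (a i + s) \<and> x (Suc i) = c (Suc i) (b i + s)"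
  shows "\<forall>y \<in> range (c n). hdist (x n) y \<le> hdist (x 0) y"
proof
  fix y assume y: "y \<in> range (c n)"
  have "mink (x 0) y \<le> mink (x k) y" if "k \<le> n" for k
    using that
  proof (induction k)
    case (Suc k)
    then have k: "k < n"
      by simp
    obtain s where s: "x k = c k (a k + s)" "x (Suc k) = c (Suc k) (b k + s)"
      using homol[OF k] by blast
    have "y \<in> range (c (Suc k)) \<or> left_of (c (Suc k)) y"
      using y orient[of "Suc k" n] Suc.prems by (cases "Suc k = n") auto
    then have "mink (x k) y \<le> mink (x (Suc k)) y"
      unfolding s using geod perp[OF k] orient[of k "Suc k"] k
      by (intro homologous_points_mink_le) auto
    with Suc show ?case
      by simp
  qed simp
  moreover have "hyp_pt (x n)" "hyp_pt (x 0)" "hyp_pt y"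
    using on_geod[of n] on_geod[of 0] geod[of n] geod[of 0] y unfolding geod_line_def by auto
  ultimately show "hdist (x n) y \<le> hdist (x 0) y"
    using hdist_le_hdist_iff by blast
qed

end
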